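(* Let $\mathfrak g$ be a pre-Lie algebra, $r\in\mathrm{Sym}^2(\mathfrak g)$ an $\mathfrak s$-matrix, and $\kappa\in\mathrm{Sym}^2(\mathfrak g)$ such that $r+t\kappa$ is an $\mathfrak s$-matrix for all $t\in\mathbb K$. Define $\pi:\mathfrak g^*\otimes\mathfrak g^*\to\mathfrak g^*$ by $\pi(\alpha,\beta)=\mathrm{ad}^*_{\kappa^\sharp(\alpha)}\beta-R^*_{\kappa^\sharp(\beta)}\alpha$. Then $\pi$ generates a one-parameter infinitesimal deformation of the phase space $(\mathfrak g^c,\mathfrak g^{*c},\omega_p)$ associated to $r$ (where $\mathfrak g^*$ carries the pre-Lie product $\cdot_r$): for every $t\in\mathbb K$, $\alpha\ast_t\beta=\alpha\cdot_r\beta+t\pi(\alpha,\beta)$ is a pre-Lie product on $\mathfrak g^*$ and $(\mathfrak g^c,(\mathfrak g^*,\ast_t)^c,\omega_p)$ is a phase space of $\mathfrak g^c$.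
   Context: A pre-Lie algebra is a finite-dimensional vector space over a field $\mathbb K$ of characteristic $0$ with product $\cdot$ satisfying $(x\cdot y)\cdot z-x\cdot(y\cdot z)=(y\cdot x)\cdot z-y\cdot(x\cdot z)$; its sub-adjacent Lie bracket is the commutator, written $[x,y]_{\mathfrak g}$ on $\mathfrak g$, and $\mathfrak g^c$ denotes this Lie algebra. Define $\langle L^*_x\alpha,y\rangle=-\langle\alpha,x\cdot y\rangle$, $\langle R^*_x\alpha,y\rangle=-\langle\alpha,y\cdot x\rangle$, $\mathrm{ad}^*_x=L^*_x-R^*_x$. For $r\in\mathrm{Sym}^2(\mathfrak g)$, $\langle r^\sharp(\alpha),\beta\rangle=r(\alpha,\beta)$; for $r=\sum_ia_i\otimes b_i$, $[r,r]=-\sum a_i\cdot a_j\otimes b_i\otimes b_j+\sum a_i\otimes b_i\cdot a_j\otimes b_j+\sum a_i\otimes a_j\otimes[b_i,b_j]_{\mathfrak g}$; $r$ is an $\mathfrak s$-matrix if $[r,r]=0$. Set $\alpha\cdot_r\beta=\mathrm{ad}^*_{r^\sharp(\alpha)}\beta-R^*_{r^\sharp(\beta)}\alpha$ (a pre-Lie product on $\mathfrak g^*$ when $r$ is an $\mathfrak s$-matrix). Given a pre-Lie product $\ast$ on $\mathfrak g^*$, with commutator $[\alpha,\beta]_\ast=\alpha\ast\beta-\beta\ast\alpha$ and $L^*_\alpha:\mathfrak g\to\mathfrak g$ defined by $\langle L^*_\alpha x,\beta\rangle=-\langle x,\alpha\ast\beta\rangle$, we say $(\mathfrak g^c,(\mathfrak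 g^*,\ast)^c,\omega_p)$ is a phase space of $\mathfrak g^c$ if the bracket $[x+\alpha,y+\beta]_p=[\alpha,\beta]_\ast+L^*_x\beta-L^*_y\alpha+L^*_\alpha y-L^*_\beta x+[x,y]_{\mathfrak g}$ is a Lie bracket on $\mathfrak g\oplus\mathfrak g^*$ for which $\omega_p(x+\alpha,y+\beta)=\langle\alpha,y\rangle-\langle x,\beta\rangle$ is a $2$-cocycle, i.e. $\omega_p([u,v]_p,w)+\omega_p([v,w]_p,u)+\omega_p([w,u]_p,v)=0$. *)

theory Defs
  imports "HOL-Analysis.Finite_Cartesian_Product"
begin

text \<open>Coordinates: g = K^n with K a field of characteristic 0 and 'n a finite index type;
  g* is identified with K^n through the (nondegenerate) pairing below.\<close>

definition sc :: "'a::times \<Rightarrow> 'a ^ 'n \<Rightarrow> 'a ^ 'n" where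
  "sc c v = (\<chi> k. c * v $ k)"

definition ee :: "'n \<Rightarrow> 'a::{zero,one} ^ 'n" where
  "ee i = (\<chi> k. if k = i then 1 else 0)"

definition pair :: "'a::field ^ 'n::finite \<Rightarrow> 'a ^ 'n \<Rightarrow> 'a" where
  "pair \<alpha> x = (\<Sum>i\<in>UNIV. \<alpha> $ i * x $ i)"

definition bilinear_map :: "('a::field ^ 'n \<Rightarrow> 'a ^ 'n \<Rightarrow> 'a ^ 'n) \<Rightarrow> bool" where
  "bilinear_map m \<longleftrightarrow>
     (\<forall>x y z. m (x + y) z = m x z + m y z) \<and> (\<forall>c x z. m (sc c x) z = sc c (m x z)) \<and>
     (\<forall>x y z. m z (x + y) = m z x + m z y) \<and> (\<forall>c x z. m z (sc c x) = sc c (m z x))"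

definition is_pre_Lie :: "('a::field ^ 'n \<Rightarrow> 'a ^ 'n \<Rightarrow> 'a ^ 'n) \<Rightarrow> bool" where
  "is_pre_Lie m \<longleftrightarrow> bilinear_map m \<and>
     (\<forall>x y z. m (m x y) z - m x (m y z) = m (m y x) z - m y (m x z))"

definition commut :: "('a::field ^ 'n \<Rightarrow> 'a ^ 'n \<Rightarrow> 'a ^ 'n) \<Rightarrow> 'a ^ 'n \<Rightarrow> 'a ^ 'n \<Rightarrow> 'a ^ 'n" where
  "commut m x y = m x y - m y x"

text \<open>Dual actions on g*: <L*_x a, y> = - <a, x.y>, <R*_x a, y> = - <a, y.x>.\<close>
definition Ldual :: "('a::field ^ 'n::finite \<Rightarrow> 'a ^ 'n \<Rightarrow> 'a ^ 'n) \<Rightarrow> 'a ^ 'n \<Rightarrow> 'a ^ 'n \<Rightarrow> 'a ^ 'n" where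
  "Ldual m x \<alpha> = (\<chi> j. - pair \<alpha> (m x (ee j)))"

definition Rdual :: "('a::field ^ 'n::finite \<Rightarrow> 'a ^ 'n \<Rightarrow> 'a ^ 'n) \<Rightarrow> 'a ^ 'n \<Rightarrow> 'a ^ 'n \<Rightarrow> 'a ^ 'n" where
  "Rdual m x \<alpha> = (\<chi> j. - pair \<alpha> (m (ee j) x))"

definition addual :: "('a::field ^ 'n::finite \<Rightarrow> 'a ^ 'n \<Rightarrow> 'a ^ 'n) \<Rightarrow> 'a ^ 'n \<Rightarrow> 'a ^ 'n \<Rightarrow> 'a ^ 'n" where
  "addual m x \<alpha> = Ldual m x \<alpha> - Rdual m x \<alpha>"

text \<open>Dual action of a product on g* back on g: <L*_a x, b> = - <x, a * b>.\<close>
definition Lstar :: "('a::field ^ 'n::finite \<Rightarrow> 'a ^ 'n \<Rightarrow> 'a ^ 'n) \<Rightarrow> 'a ^ 'n \<Rightarrow> 'a ^ 'n \<Rightarrow> 'a ^ 'n" where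
  "Lstar ast \<alpha> x = (\<chi> j. - pair (ast \<alpha> (ee j)) x)"

text \<open>Elements of g (x) g are given by coefficient matrices r = sum r_ij e_i (x) e_j;
  Sym^2(g) = symmetric ones.\<close>
definition symm :: "'a ^ 'n ^ 'n \<Rightarrow> bool" where
  "symm r \<longleftrightarrow> (\<forall>i j. r $ i $ j = r $ j $ i)"

definition sharp :: "'a::field ^ 'n::finite ^ 'n \<Rightarrow> 'a ^ 'n \<Rightarrow> 'a ^ 'n" where
  "sharp r \<alpha> = (\<chi> j. \<Sum>i\<in>UNIV. r $ i $ j * \<alpha> $ i)"

definition smat :: "'a::times \<Rightarrow> 'a ^ 'n ^ 'n \<Rightarrow> 'a ^ 'n ^ 'n" where
  "smat t k = (\<chi> i j. t * k $ i $ j)"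

text \<open>[r,r] for r = sum_p a_p (x) b_p, with p = (i,j), a_p = r_ij e_i, b_p = e_j, as an element
  of g (x) g (x) g, evaluated on (alpha, beta, gamma) in g* x g* x g*.\<close>
definition rr_eval :: "('a::field ^ 'n::finite \<Rightarrow> 'a ^ 'n \<Rightarrow> 'a ^ 'n) \<Rightarrow> 'a ^ 'n ^ 'n
     \<Rightarrow> 'a ^ 'n \<Rightarrow> 'a ^ 'n \<Rightarrow> 'a ^ 'n \<Rightarrow> 'a" where
  "rr_eval m r \<alpha> \<beta> \<gamma> =
     (let a = (\<lambda>(i,j). sc (r $ i $ j) (ee i)); b = (\<lambda>(i::'n,j). ee j);
          T = (\<lambda>u v w. pair \<alpha> u * pair \<beta> v * pair \<gamma> w) in
      - (\<Sum>p\<in>UNIV. \<Sum>q\<in>UNIV. T (m (a p) (a q)) (b p) (b q))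
      + (\<Sum>p\<in>UNIV. \<Sum>q\<in>UNIV. T (a p) (m (b p) (a q)) (b q))
      + (\<Sum>p\<in>UNIV. \<Sum>q\<in>UNIV. T (a p) (a q) (commut m (b p) (b q))))"

definition s_matrix :: "('a::field ^ 'n::finite \<Rightarrow> 'a ^ 'n \<Rightarrow> 'a ^ 'n) \<Rightarrow> 'a ^ 'n ^ 'n \<Rightarrow> bool" where
  "s_matrix m r \<longleftrightarrow> (\<forall>\<alpha> \<beta> \<gamma>. rr_eval m r \<alpha> \<beta> \<gamma> = 0)"

definition dot_r :: "('a::field ^ 'n::finite \<Rightarrow> 'a ^ 'n \<Rightarrow> 'a ^ 'n) \<Rightarrow> 'a ^ 'n ^ 'n
     \<Rightarrow> 'a ^ 'n \<Rightarrow> 'a ^ 'n \<Rightarrow> 'a ^ 'n" where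
  "dot_r m r \<alpha> \<beta> = addual m (sharp r \<alpha>) \<beta> - Rdual m (sharp r \<beta>) \<alpha>"

text \<open>Elements of g (+) g* as pairs (x, alpha).\<close>
definition padd :: "('a::plus ^ 'n) \<times> ('a ^ 'n) \<Rightarrow> ('a ^ 'n) \<times> ('a ^ 'n) \<Rightarrow> ('a ^ 'n) \<times> ('a ^ 'n)" where
  "padd u v = (fst u + fst v, snd u + snd v)"

definition psc :: "'a::times \<Rightarrow> ('a ^ 'n) \<times> ('a ^ 'n) \<Rightarrow> ('a ^ 'n) \<times> ('a ^ 'n)" where
  "psc c u = (sc c (fst u), sc c (snd u))"

definition is_Lie_bracket :: "(('a::field ^ 'n) \<times> ('a ^ 'n) \<Rightarrow> ('a ^ 'n) \<times> ('a ^ 'n) \<Rightarrow> ('a ^ 'n) \<times> ('a ^ 'n)) \<Rightarrow> bool" where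
  "is_Lie_bracket b \<longleftrightarrow>
     (\<forall>u v w. b (padd u v) w = padd (b u w) (b v w)) \<and> (\<forall>c u w. b (psc c u) w = psc c (b u w)) \<and>
     (\<forall>u v w. b w (padd u v) = padd (b w u) (b w v)) \<and> (\<forall>c u w. b w (psc c u) = psc c (b w u)) \<and>
     (\<forall>u. b u u = (0, 0)) \<and>
     (\<forall>u v w. padd (padd (b u (b v w)) (b v (b w u))) (b w (b u v)) = (0, 0))"

definition pbr :: "('a::field ^ 'n::finite \<Rightarrow> 'a ^ 'n \<Rightarrow> 'a ^ 'n) \<Rightarrow> ('a ^ 'n \<Rightarrow> 'a ^ 'n \<Rightarrow> 'a ^ 'n)
     \<Rightarrow> ('a ^ 'n) \<times> ('a ^ 'n) \<Rightarrow> ('a ^ 'n) \<times> ('a ^ 'n) \<Rightarrow> ('a ^ 'n) \<times> ('a ^ 'n)" where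
  "pbr m ast u v = (case u of (x, \<alpha>) \<Rightarrow> case v of (y, \<beta>) \<Rightarrow>
     (commut m x y + Lstar ast \<alpha> y - Lstar ast \<beta> x,
      commut ast \<alpha> \<beta> + Ldual m x \<beta> - Ldual m y \<alpha>))"

definition omega_p :: "('a::field ^ 'n::finite) \<times> ('a ^ 'n) \<Rightarrow> ('a ^ 'n) \<times> ('a ^ 'n) \<Rightarrow> 'a" where
  "omega_p u v = pair (snd u) (fst v) - pair (fst u) (snd v)"

definition phase_space :: "('a::field ^ 'n::finite \<Rightarrow> 'a ^ 'n \<Rightarrow> 'a ^ 'n) \<Rightarrow> ('a ^ 'n \<Rightarrow> 'a ^ 'n \<Rightarrow> 'a ^ 'n) \<Rightarrow> bool" where
  "phase_space m ast \<longleftrightarrow> is_Lie_bracket (pbr m ast) \<and>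
     (\<forall>u v w. omega_p (pbr m ast u v) w + omega_p (pbr m ast v w) u + omega_p (pbr m ast w u) v = 0)"

end

theory Submission
  imports Defs
begin

text \<open>
  The product \<open>\<alpha> \<cdot>r \<beta>\<close> is linear in \<open>r\<close>, so the deformed product is \<open>\<cdot>(r + t\<kappa>)\<close> and it
  suffices to treat a single symmetric s-matrix \<open>R\<close>. Pairing \<open>[R,R] = 0\<close> with three covectors
  says exactly that \<open>R\<sharp>(\<alpha> \<cdot>R \<beta>) = R\<sharp>\<alpha> \<cdot> R\<sharp>\<beta>\<close>. With this, the pre-Lie identity for \<open>\<cdot>R\<close>
  reduces to that of \<open>\<cdot>\<close>, and the shear \<open>(x, \<alpha>) \<mapsto> (x + R\<sharp>\<alpha>, \<alpha>)\<close> carries the phase space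
  bracket onto the bracket of the semidirect product of \<open>g\<^sup>c\<close> with \<open>g\<^sup>*\<close> along \<open>L\<^sup>*\<close>, which is a
  Lie bracket because \<open>L\<close> is a representation of \<open>g\<^sup>c\<close>. Finally \<open>\<omega>p\<close> is a 2-cocycle for every
  bilinear product on \<open>g\<^sup>*\<close>.
\<close>

lemma sc_nth [simp]: "sc c v $ k = c * v $ k"
  by (simp add: sc_def)

lemma ee_nth [simp]: "ee i $ k = (if k = i then (1::'a::{zero,one}) else 0)"
  by (simp add: ee_def)

lemma sc_add_right [simp]: "sc (c::'a::field) (x + y) = sc c x + sc c y"
  by (simp add: vec_eq_iff algebra_simps)

lemma sc_diff_right [simp]: "sc (c::'a::field) (x - y) = sc c x - sc c y"
  by (simp add: vec_eq_iff algebra_simps)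

lemma sc_zero [simp]: "sc (c::'a::field) 0 = 0" "sc (0::'a::field) x = 0"
  by (simp_all add: vec_eq_iff)

lemma vec_expansion: "(y::'a::field^'n::finite) = (\<Sum>j\<in>UNIV. sc (y $ j) (ee j))"
  by (simp add: vec_eq_iff if_distrib cong: if_cong)

lemma pair_add_left [simp]: "pair (a + b) x = pair a x + pair b x"
  and pair_add_right [simp]: "pair x (a + b) = pair x a + pair x b"
  and pair_diff_left [simp]: "pair (a - b) x = pair a x - pair b x"
  and pair_diff_right [simp]: "pair x (a - b) = pair x a - pair x b"
  and pair_minus_left [simp]: "pair (- a) x = - pair a x"
  and pair_minus_right [simp]: "pair x (- a) = - pair x a"
  and pair_sc_left [simp]: "pair (sc c a) x = c * pair a x"
  and pair_sc_right [simp]: "pair x (sc c a) = c * pair x a"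
  and pair_zero_left [simp]: "pair 0 x = 0"
  and pair_zero_right [simp]: "pair x 0 = 0"
  by (simp_all add: pair_def algebra_simps sum.distrib sum_subtractf sum_negf sum_distrib_left)

lemma pair_ee_right [simp]: "pair a (ee j) = a $ j"
  by (simp add: pair_def if_distrib cong: if_cong)

lemma pair_commute: "pair a b = pair b a"
  by (simp add: pair_def mult.commute)

lemma pair_sum_right: "finite A \<Longrightarrow> pair a (\<Sum>p\<in>A. f p) = (\<Sum>p\<in>A. pair a (f p))"
  by (induct A rule: finite_induct) auto

lemma vec_eq_pair_left: "(\<And>y. pair a y = pair b y) \<Longrightarrow> a = b"
  unfolding vec_eq_iff by (metis pair_ee_right pair_commute)

lemma vec_eq_pair_right: "(\<And>y. pair y a = pair y b) \<Longrightarrow> a = b"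
  by (metis vec_eq_pair_left pair_commute)

lemma prod_eq_pairI:
  "(\<And>\<delta>. pair \<delta> (fst u) = pair \<delta> (fst v)) \<Longrightarrow> (\<And>y. pair (snd u) y = pair (snd v) y) \<Longrightarrow> u = v"
  by (metis prod.expand vec_eq_pair_left vec_eq_pair_right)

definition sc_linear :: "('a::field ^ 'n \<Rightarrow> 'a ^ 'm) \<Rightarrow> bool" where
  "sc_linear f \<longleftrightarrow> (\<forall>x y. f (x + y) = f x + f y) \<and> (\<forall>c x. f (sc c x) = sc c (f x))"

context
  fixes f :: "'a::field ^ 'n \<Rightarrow> 'a ^ 'm"
  assumes f: "sc_linear f"
begin

lemma sc_linear_add: "f (x + y) = f x + f y"
  and sc_linear_sc: "f (sc c x) = sc c (f x)"
  using f unfolding sc_linear_def by blast+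

lemma sc_linear_zero: "f 0 = 0"
  by (metis sc_linear_sc sc_zero)

lemma sc_linear_minus: "f (- x) = - f x"
proof -
  have "\<And>v::'a^'k. sc (- 1) v = - v"
    by (simp add: vec_eq_iff)
  then show ?thesis
    by (metis sc_linear_sc)
qed

lemma sc_linear_diff: "f (x - y) = f x - f y"
  using sc_linear_add[of x "- y"] by (simp add: sc_linear_minus)

lemma sc_linear_sum: "finite A \<Longrightarrow> f (\<Sum>p\<in>A. g p) = (\<Sum>p\<in>A. f (g p))"
  by (induct A rule: finite_induct) (auto simp: sc_linear_zero sc_linear_add)

end

text \<open>The vector \<open>\<chi> j. \<langle>a, f e\<^sub>j\<rangle>\<close> represents the transpose of \<open>f\<close> applied to \<open>a\<close>.\<close>

lemma pair_transpose:
  fixes f :: "'a::field ^ 'n::finite \<Rightarrow> 'a ^ 'm::finite"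
  assumes "sc_linear f"
  shows "pair (\<chi> j. - pair a (f (ee j))) y = - pair a (f y)"
proof -
  have "f y = (\<Sum>j\<in>UNIV. sc (y $ j) (f (ee j)))"
    by (subst vec_expansion) (simp add: sc_linear_sum[OF assms] sc_linear_sc[OF assms])
  then have "pair a (f y) = (\<Sum>j\<in>UNIV. y $ j * pair a (f (ee j)))"
    by (simp add: pair_sum_right)
  then show ?thesis
    by (simp add: pair_def[of "vec_lambda _"] mult.commute sum_negf)
qed

lemma bilinear_map_sc_linear:
  assumes "bilinear_map m"
  shows "sc_linear (m z)" and "sc_linear (\<lambda>v. m v z)"
  using assms unfolding bilinear_map_def sc_linear_def by blast+

lemma bilinear_map_sum_sc:
  assumes "bilinear_map M" and "finite A" and "finite B"
  shows "pair \<delta> (M (\<Sum>p\<in>A. sc (c p) (f p)) (\<Sum>q\<in>B. sc (d q) (g q)))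
       = (\<Sum>p\<in>A. \<Sum>q\<in>B. c p * d q * pair \<delta> (M (f p) (g q)))"
proof -
  note lin = bilinear_map_sc_linear[OF assms(1)]
  have "M (\<Sum>p\<in>A. sc (c p) (f p)) (\<Sum>q\<in>B. sc (d q) (g q))
      = (\<Sum>p\<in>A. sc (c p) (M (f p) (\<Sum>q\<in>B. sc (d q) (g q))))"
    using sc_linear_sum[OF lin(2) assms(2)] sc_linear_sc[OF lin(2)] by simp
  also have "\<dots> = (\<Sum>p\<in>A. sc (c p) (\<Sum>q\<in>B. sc (d q) (M (f p) (g q))))"
    using sc_linear_sum[OF lin(1) assms(3)] sc_linear_sc[OF lin(1)] by simp
  finally show ?thesis
    using assms(2,3) by (simp add: pair_sum_right sum_distrib_left mult_ac)
qed

lemma bilinear_map_commut: "bilinear_map m \<Longrightarrow> bilinear_map (commut m)"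
  unfolding bilinear_map_def commut_def by (simp add: algebra_simps)

lemma pair_Ldual: "sc_linear (m x) \<Longrightarrow> pair (Ldual m x \<alpha>) y = - pair \<alpha> (m x y)"
  unfolding Ldual_def by (rule pair_transpose)

lemma pair_Rdual: "sc_linear (\<lambda>v. m v x) \<Longrightarrow> pair (Rdual m x \<alpha>) y = - pair \<alpha> (m y x)"
  unfolding Rdual_def using pair_transpose[of "\<lambda>v. m v x"] by simp

lemma pair_Lstar: "sc_linear (ast \<alpha>) \<Longrightarrow> pair \<delta> (Lstar ast \<alpha> x) = - pair (ast \<alpha> \<delta>) x"
  unfolding Lstar_def using pair_transpose[of "ast \<alpha>" x \<delta>] by (simp add: pair_commute)

lemma sc_linear_sharp: "sc_linear (sharp R)"
  unfolding sc_linear_def sharp_def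
  by (simp add: vec_eq_iff algebra_simps sum.distrib sum_distrib_left)

lemmas sharp_add [simp] = sc_linear_add[OF sc_linear_sharp]
  and sharp_diff [simp] = sc_linear_diff[OF sc_linear_sharp]
  and sharp_sc [simp] = sc_linear_sc[OF sc_linear_sharp]

lemma pair_sharp_symm:
  assumes "symm R"
  shows "pair \<beta> (sharp R \<alpha>) = pair \<alpha> (sharp R \<beta>)"
proof -
  have "pair \<beta> (sharp R \<alpha>) = (\<Sum>j\<in>UNIV. \<Sum>i\<in>UNIV. \<beta> $ j * R $ i $ j * \<alpha> $ i)"
    by (simp add: pair_def sharp_def sum_distrib_left mult.assoc)
  also have "\<dots> = (\<Sum>i\<in>UNIV. \<Sum>j\<in>UNIV. \<beta> $ j * R $ i $ j * \<alpha> $ i)"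
    by (rule sum.swap)
  also have "\<dots> = pair \<alpha> (sharp R \<beta>)"
    using assms by (simp add: pair_def sharp_def sum_distrib_left symm_def mult_ac)
  finally show ?thesis .
qed

lemma sharp_add_smat: "sharp (r + smat t k) \<alpha> = sharp r \<alpha> + sc t (sharp k \<alpha>)"
  by (simp add: vec_eq_iff sharp_def smat_def sum.distrib sum_distrib_left algebra_simps)

subsection \<open>The bracket \<open>[r, r]\<close> in terms of \<open>r\<^sup>\<sharp>\<close>\<close>

lemma sum_pairs_UNIV: "(\<Sum>p\<in>(UNIV::('n::finite \<times> 'n) set). g p) = (\<Sum>i\<in>UNIV. \<Sum>j\<in>UNIV. g (i, j))"
  by (simp add: sum.cartesian_product)

lemma contract_first_factor_eq_sharp:
  "(\<Sum>p\<in>UNIV. sc (pair \<alpha> ((\<lambda>(i::'n::finite, j). sc (R $ i $ j) (ee i)) p)) ((\<lambda>(i, j). ee j) p))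
     = sharp R (\<alpha>::'a::field^'n)"
  by (simp add: vec_eq_iff sum_pairs_UNIV sharp_def if_distrib mult.commute cong: if_cong)

lemma contract_second_factor_eq_sharp:
  assumes "symm R"
  shows "(\<Sum>p\<in>UNIV. sc (pair \<beta> ((\<lambda>(i::'n::finite, j). ee j) p)) ((\<lambda>(i, j). sc (R $ i $ j) (ee i)) p))
     = sharp R (\<beta>::'a::field^'n)"
proof -
  have "(\<Sum>i\<in>UNIV. \<Sum>j\<in>UNIV. \<beta> $ j * (R $ i $ j * (if k = i then 1 else 0)))
      = (\<Sum>j\<in>UNIV. \<beta> $ j * R $ k $ j)" for k
    by (simp add: if_distrib sum.swap[of _ UNIV UNIV] cong: if_cong)
  then show ?thesis
    using assms by (simp add: vec_eq_iff sum_pairs_UNIV sharp_def symm_def mult.commute)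
qed

lemma rr_eval_sharp:
  assumes bm: "bilinear_map m" and sy: "symm R"
  shows "rr_eval m R \<alpha> \<beta> \<gamma> = - pair \<alpha> (m (sharp R \<beta>) (sharp R \<gamma>))
     + pair \<beta> (m (sharp R \<alpha>) (sharp R \<gamma>)) + pair \<gamma> (commut m (sharp R \<alpha>) (sharp R \<beta>))"
proof -
  let ?a = "\<lambda>(i::'b, j). sc (R $ i $ j) (ee i) :: 'a^'b"
  let ?b = "\<lambda>(i::'b, j). ee j :: 'a^'b"
  have "pair \<alpha> (m (sharp R \<beta>) (sharp R \<gamma>))
      = (\<Sum>p\<in>UNIV. \<Sum>q\<in>UNIV. pair \<alpha> (m (?a p) (?a q)) * pair \<beta> (?b p) * pair \<gamma> (?b q))"
    unfolding contract_second_factor_eq_sharp[OF sy, symmetric] bilinear_map_sum_sc[OF bm finite finite]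
    by (simp add: mult_ac)
  moreover have "pair \<beta> (m (sharp R \<alpha>) (sharp R \<gamma>))
      = (\<Sum>p\<in>UNIV. \<Sum>q\<in>UNIV. pair \<alpha> (?a p) * pair \<beta> (m (?b p) (?a q)) * pair \<gamma> (?b q))"
    unfolding contract_first_factor_eq_sharp[where \<alpha> = \<alpha>, symmetric]
      contract_second_factor_eq_sharp[OF sy, where \<beta> = \<gamma>, symmetric] bilinear_map_sum_sc[OF bm finite finite]
    by (simp add: mult_ac)
  moreover have "pair \<gamma> (commut m (sharp R \<alpha>) (sharp R \<beta>))
      = (\<Sum>p\<in>UNIV. \<Sum>q\<in>UNIV. pair \<alpha> (?a p) * pair \<beta> (?a q) * pair \<gamma> (commut m (?b p) (?b q)))"
    unfolding contract_first_factor_eq_sharp[symmetric]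
      bilinear_map_sum_sc[OF bilinear_map_commut[OF bm] finite finite]
    by (simp add: mult_ac)
  ultimately show ?thesis
    unfolding rr_eval_def Let_def by simp
qed

subsection \<open>The product \<open>\<cdot>\<^sub>R\<close>\<close>

context
  fixes m :: "'a::field ^ 'n::finite \<Rightarrow> 'a ^ 'n \<Rightarrow> 'a ^ 'n"
  assumes bilinear: "bilinear_map m"
begin

lemmas m_linear [simp] =
  bilinear_map_sc_linear[OF bilinear, THEN sc_linear_add]
  bilinear_map_sc_linear[OF bilinear, THEN sc_linear_diff]
  bilinear_map_sc_linear[OF bilinear, THEN sc_linear_minus]
  bilinear_map_sc_linear[OF bilinear, THEN sc_linear_sc]
  bilinear_map_sc_linear[OF bilinear, THEN sc_linear_zero]

lemma pair_Ldual_m [simp]: "pair (Ldual m x \<alpha>) y = - pair \<alpha> (m x y)"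
  using pair_Ldual bilinear_map_sc_linear[OF bilinear] by blast

lemma pair_Rdual_m [simp]: "pair (Rdual m x \<alpha>) y = - pair \<alpha> (m y x)"
  using pair_Rdual bilinear_map_sc_linear[OF bilinear] by blast

lemma pair_dot_r [simp]:
  "pair (dot_r m R \<alpha> \<beta>) y =
     - pair \<beta> (m (sharp R \<alpha>) y) + pair \<beta> (m y (sharp R \<alpha>)) + pair \<alpha> (m y (sharp R \<beta>))"
  by (simp add: dot_r_def addual_def)

lemma bilinear_map_dot_r: "bilinear_map (dot_r m R)"
  unfolding bilinear_map_def by (intro conjI allI; rule vec_eq_pair_left; simp add: algebra_simps)

lemma dot_r_add_smat: "dot_r m r \<alpha> \<beta> + sc t (dot_r m k \<alpha> \<beta>) = dot_r m (r + smat t k) \<alpha> \<beta>"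
  by (rule vec_eq_pair_left) (simp add: sharp_add_smat algebra_simps)

lemma pair_s_matrix:
  assumes "symm R" and "s_matrix m R"
  shows "pair \<alpha> (m (sharp R \<beta>) (sharp R \<gamma>)) = pair \<beta> (m (sharp R \<alpha>) (sharp R \<gamma>))
     + pair \<gamma> (m (sharp R \<alpha>) (sharp R \<beta>)) - pair \<gamma> (m (sharp R \<beta>) (sharp R \<alpha>))"
proof -
  have "rr_eval m R \<alpha> \<beta> \<gamma> = 0"
    using assms(2) unfolding s_matrix_def by blast
  then show ?thesis
    unfolding rr_eval_sharp[OF bilinear assms(1)] commut_def pair_diff_right by algebra
qed

lemma sharp_dot_r:
  assumes "symm R" and "s_matrix m R"
  shows "sharp R (dot_r m R \<alpha> \<beta>) = m (sharp R \<alpha>) (sharp R \<beta>)"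
proof (rule vec_eq_pair_right)
  fix \<gamma>
  have "pair \<gamma> (sharp R (dot_r m R \<alpha> \<beta>)) = pair (dot_r m R \<alpha> \<beta>) (sharp R \<gamma>)"
    using pair_sharp_symm[OF assms(1)] by simp
  then show "pair \<gamma> (sharp R (dot_r m R \<alpha> \<beta>)) = pair \<gamma> (m (sharp R \<alpha>) (sharp R \<beta>))"
    using pair_s_matrix[OF assms, of \<alpha> \<gamma> \<beta>] by simp
qed

end

lemma pair_pre_Lie:
  assumes "is_pre_Lie m"
  shows "pair \<delta> (m (m a b) c) = pair \<delta> (m a (m b c)) + pair \<delta> (m (m b a) c) - pair \<delta> (m b (m a c))"
proof -
  have "m (m a b) c - m a (m b c) = m (m b a) c - m b (m a c)"
    using assms unfolding is_pre_Lie_def by blast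
  then have "pair \<delta> (m (m a b) c) - pair \<delta> (m a (m b c)) = pair \<delta> (m (m b a) c) - pair \<delta> (m b (m a c))"
    by (metis pair_diff_right)
  then show ?thesis
    by algebra
qed

lemma is_pre_Lie_dot_r:
  assumes pl: "is_pre_Lie m" and "symm R" and "s_matrix m R"
  shows "is_pre_Lie (dot_r m R)"
proof -
  have bm: "bilinear_map m"
    using pl is_pre_Lie_def by blast
  note sharp_hom [simp] = sharp_dot_r[OF bm assms(2,3)]
  show ?thesis
    unfolding is_pre_Lie_def
  proof (intro conjI allI bilinear_map_dot_r[OF bm])
    fix \<alpha> \<beta> \<gamma>
    let ?D = "dot_r m R" and ?x = "sharp R \<alpha>" and ?y = "sharp R \<beta>" and ?z = "sharp R \<gamma>"
    show "?D (?D \<alpha> \<beta>) \<gamma> - ?D \<alpha> (?D \<beta> \<gamma>) = ?D (?D \<beta> \<alpha>) \<gamma> - ?D \<beta> (?D \<alpha> \<gamma>)"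
    proof (rule vec_eq_pair_left)
      fix w
      show "pair (?D (?D \<alpha> \<beta>) \<gamma> - ?D \<alpha> (?D \<beta> \<gamma>)) w = pair (?D (?D \<beta> \<alpha>) \<gamma> - ?D \<beta> (?D \<alpha> \<gamma>)) w"
        using pair_pre_Lie[OF pl, of \<gamma> ?x ?y w] pair_pre_Lie[OF pl, of \<gamma> ?x w ?y]
          pair_pre_Lie[OF pl, of \<gamma> ?y w ?x] pair_pre_Lie[OF pl, of \<alpha> w ?y ?z]
          pair_pre_Lie[OF pl, of \<beta> ?x w ?z]
        by (simp add: bm)
    qed
  qed
qed

subsection \<open>Phase spaces\<close>

lemma fst_padd [simp]: "fst (padd u v) = fst u + fst v"
  and snd_padd [simp]: "snd (padd u v) = snd u + snd v"
  by (simp_all add: padd_def)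

lemma fst_psc [simp]: "fst (psc c u) = sc c (fst u)"
  and snd_psc [simp]: "snd (psc c u) = sc c (snd u)"
  by (simp_all add: psc_def)

lemma is_Lie_bracket_transfer:
  fixes b :: "('a::field^'n) \<times> ('a^'n) \<Rightarrow> ('a^'n) \<times> ('a^'n) \<Rightarrow> ('a^'n) \<times> ('a^'n)"
    and f g :: "('a^'n) \<times> ('a^'n) \<Rightarrow> ('a^'n) \<times> ('a^'n)"
  assumes L: "is_Lie_bracket b"
    and f_add: "\<And>u v. f (padd u v) = padd (f u) (f v)" and f_sc: "\<And>c u. f (psc c u) = psc c (f u)"
    and g_add: "\<And>u v. g (padd u v) = padd (g u) (g v)" and g_sc: "\<And>c u. g (psc c u) = psc c (g u)"
    and fg: "\<And>u. f (g u) = u"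
  shows "is_Lie_bracket (\<lambda>u v. g (b (f u) (f v)))"
proof -
  have "g (psc 0 (0, 0)) = psc 0 (g (0, 0))"
    by (rule g_sc)
  then have g_zero: "g (0, 0) = (0, 0)"
    by (simp add: psc_def)
  from L have "b (padd u v) w = padd (b u w) (b v w)" "b (psc c u) w = psc c (b u w)"
      "b w (padd u v) = padd (b w u) (b w v)" "b w (psc c u) = psc c (b w u)" "b u u = (0, 0)"
      "padd (padd (b u (b v w)) (b v (b w u))) (b w (b u v)) = (0, 0)" for u v w c
    unfolding is_Lie_bracket_def by blast+
  then show ?thesis
    unfolding is_Lie_bracket_def by (simp add: f_add f_sc fg g_zero flip: g_add g_sc)
qed

definition semidirect_bracket ::
  "('a::field ^ 'n::finite \<Rightarrow> 'a ^ 'n \<Rightarrow> 'a ^ 'n) \<Rightarrow> ('a ^ 'n) \<times> ('a ^ 'n) \<Rightarrow> ('a ^ 'n) \<times> ('a ^ 'n) \<Rightarrow> ('a ^ 'n) \<times> ('a ^ 'n)"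
  where "semidirect_bracket m u v =
    (commut m (fst u) (fst v), Ldual m (fst u) (snd v) - Ldual m (fst v) (snd u))"

lemma is_Lie_bracket_semidirect:
  fixes m :: "'a::field ^ 'n::finite \<Rightarrow> 'a ^ 'n \<Rightarrow> 'a ^ 'n"
  assumes pl: "is_pre_Lie m"
  shows "is_Lie_bracket (semidirect_bracket m)"
proof -
  have bm: "bilinear_map m"
    using pl is_pre_Lie_def by blast
  note simps = semidirect_bracket_def commut_def algebra_simps bm
  show ?thesis
    unfolding is_Lie_bracket_def
  proof (intro conjI allI)
    fix u v w :: "('a^'n) \<times> ('a^'n)" and c :: 'a
    let ?x = "fst u" and ?y = "fst v" and ?z = "fst w"
    show "semidirect_bracket m (padd u v) w = padd (semidirect_bracket m u w) (semidirect_bracket m v w)"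
      and "semidirect_bracket m (psc c u) w = psc c (semidirect_bracket m u w)"
      and "semidirect_bracket m w (padd u v) = padd (semidirect_bracket m w u) (semidirect_bracket m w v)"
      and "semidirect_bracket m w (psc c u) = psc c (semidirect_bracket m w u)"
      and "semidirect_bracket m u u = (0, 0)"
      by (rule prod_eq_pairI; simp add: simps)+
    show "padd (padd (semidirect_bracket m u (semidirect_bracket m v w))
        (semidirect_bracket m v (semidirect_bracket m w u))) (semidirect_bracket m w (semidirect_bracket m u v)) = (0, 0)"
    proof (rule prod_eq_pairI)
      fix \<delta>
      show "pair \<delta> (fst (padd (padd (semidirect_bracket m u (semidirect_bracket m v w))
          (semidirect_bracket m v (semidirect_bracket m w u))) (semidirect_bracket m w (semidirect_bracket m u v))))
        = pair \<delta> (fst ((0, 0) :: ('a^'n) \<times> ('a^'n)))"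
        using pair_pre_Lie[OF pl, of \<delta> ?y ?x ?z] pair_pre_Lie[OF pl, of \<delta> ?z ?y ?x]
          pair_pre_Lie[OF pl, of \<delta> ?x ?z ?y]
        by (simp add: simps) algebra
    next
      fix y
      show "pair (snd (padd (padd (semidirect_bracket m u (semidirect_bracket m v w))
          (semidirect_bracket m v (semidirect_bracket m w u))) (semidirect_bracket m w (semidirect_bracket m u v)))) y
        = pair (snd ((0, 0) :: ('a^'n) \<times> ('a^'n))) y"
        using pair_pre_Lie[OF pl, of "snd u" ?y ?z y] pair_pre_Lie[OF pl, of "snd v" ?z ?x y]
          pair_pre_Lie[OF pl, of "snd w" ?x ?y y]
        by (simp add: simps)
    qed
  qed
qed

definition shear :: "'a::field ^ 'n::finite ^ 'n \<Rightarrow> ('a ^ 'n) \<times> ('a ^ 'n) \<Rightarrow> ('a ^ 'n) \<times> ('a ^ 'n)" where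
  "shear R u = (fst u + sharp R (snd u), snd u)"

definition unshear :: "'a::field ^ 'n::finite ^ 'n \<Rightarrow> ('a ^ 'n) \<times> ('a ^ 'n) \<Rightarrow> ('a ^ 'n) \<times> ('a ^ 'n)" where
  "unshear R u = (fst u - sharp R (snd u), snd u)"

lemma pbr_dot_r_shear:
  assumes bm: "bilinear_map m" and "symm R" and "s_matrix m R"
  shows "pbr m (dot_r m R) u v = unshear R (semidirect_bracket m (shear R u) (shear R v))"
proof -
  obtain x \<alpha> y \<beta> where uv: "u = (x, \<alpha>)" "v = (y, \<beta>)"
    by (metis prod.exhaust)
  note Lstar_dot_r [simp] =
    pair_Lstar[OF bilinear_map_sc_linear(1)[OF bilinear_map_dot_r[OF bm]]]
  have pair_sharp_Ldual [simp]: "pair \<delta> (sharp R (Ldual m x \<beta>)) = - pair \<beta> (m x (sharp R \<delta>))" for \<delta> x \<beta>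
    using pair_sharp_symm[OF assms(2), of \<delta> "Ldual m x \<beta>"] by (simp add: bm)
  show ?thesis
    unfolding uv
  proof (rule prod_eq_pairI)
    fix \<delta>
    show "pair \<delta> (fst (pbr m (dot_r m R) (x, \<alpha>) (y, \<beta>)))
        = pair \<delta> (fst (unshear R (semidirect_bracket m (shear R (x, \<alpha>)) (shear R (y, \<beta>)))))"
      using pair_s_matrix[OF bm assms(2,3), of \<alpha> \<beta> \<delta>]
      by (simp add: pbr_def unshear_def semidirect_bracket_def shear_def commut_def bm algebra_simps)
  qed (simp add: pbr_def unshear_def semidirect_bracket_def shear_def commut_def bm algebra_simps)
qed

lemma omega_p_cocycle:
  assumes "bilinear_map m" and "\<And>\<alpha>. sc_linear (ast \<alpha>)"
  shows "omega_p (pbr m ast u v) w + omega_p (pbr m ast v w) u + omega_p (pbr m ast w u) v = 0"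
proof -
  obtain x \<alpha> y \<beta> z \<gamma> where uvw: "u = (x, \<alpha>)" "v = (y, \<beta>)" "w = (z, \<gamma>)"
    by (metis prod.exhaust)
  have omega_p_swap: "omega_p a b = pair (snd a) (fst b) - pair (snd b) (fst a)" for a b
    unfolding omega_p_def by (simp add: pair_commute)
  show ?thesis
    unfolding omega_p_swap uvw pbr_def
    by (simp add: pair_Lstar[OF assms(2)] pair_Ldual_m[OF assms(1)] commut_def algebra_simps)
qed

lemma phase_space_dot_r:
  assumes pl: "is_pre_Lie m" and "symm R" and "s_matrix m R"
  shows "phase_space m (dot_r m R)"
proof -
  have bm: "bilinear_map m"
    using pl is_pre_Lie_def by blast
  have "pbr m (dot_r m R) = (\<lambda>u v. unshear R (semidirect_bracket m (shear R u) (shear R v)))"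
    using pbr_dot_r_shear[OF bm assms(2,3)] by (intro ext)
  moreover have "is_Lie_bracket (\<lambda>u v. unshear R (semidirect_bracket m (shear R u) (shear R v)))"
    by (rule is_Lie_bracket_transfer[OF is_Lie_bracket_semidirect[OF pl]])
      (simp_all add: shear_def unshear_def padd_def psc_def)
  ultimately have "is_Lie_bracket (pbr m (dot_r m R))"
    by simp
  moreover have "sc_linear (dot_r m R \<alpha>)" for \<alpha>
    using bilinear_map_sc_linear(1)[OF bilinear_map_dot_r[OF bm]] .
  ultimately show ?thesis
    unfolding phase_space_def using omega_p_cocycle[OF bm] by blast
qed

theorem proposition5p8:
  fixes m :: "'a::field_char_0 ^ 'n::finite \<Rightarrow> 'a ^ 'n \<Rightarrow> 'a ^ 'n"
    and r \<kappa> :: "'a ^ 'n ^ 'n"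
  assumes "is_pre_Lie m"
    and "symm r" and "s_matrix m r"
    and "symm \<kappa>" and "\<forall>t. s_matrix m (r + smat t \<kappa>)"
  shows "\<forall>t::'a.
     is_pre_Lie (\<lambda>\<alpha> \<beta>. dot_r m r \<alpha> \<beta> + sc t (dot_r m \<kappa> \<alpha> \<beta>)) \<and>
     phase_space m (\<lambda>\<alpha> \<beta>. dot_r m r \<alpha> \<beta> + sc t (dot_r m \<kappa> \<alpha> \<beta>))"
proof
  fix t :: 'a
  have bm: "bilinear_map m"
    using assms(1) is_pre_Lie_def by blast
  have deformed: "(\<lambda>\<alpha> \<beta>. dot_r m r \<alpha> \<beta> + sc t (dot_r m \<kappa> \<alpha> \<beta>)) = dot_r m (r + smat t \<kappa>)"
    using dot_r_add_smat[OF bm] by (intro ext)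
  have "symm (r + smat t \<kappa>)"
    using assms(2,4) by (simp add: symm_def smat_def)
  moreover have "s_matrix m (r + smat t \<kappa>)"
    using assms(5) by blast
  ultimately show "is_pre_Lie (\<lambda>\<alpha> \<beta>. dot_r m r \<alpha> \<beta> + sc t (dot_r m \<kappa> \<alpha> \<beta>)) \<and>
      phase_space m (\<lambda>\<alpha> \<beta>. dot_r m r \<alpha> \<beta> + sc t (dot_r m \<kappa> \<alpha> \<beta>))"
    unfolding deformed using is_pre_Lie_dot_r[OF assms(1)] phase_space_dot_r[OF assms(1)] by blast
qed

end
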